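(* Let $\Sigma$ be a graded alphabet and $t\in T_\Sigma$. Then the relation $\sim_\mathrm{h}$ on the state set $\mathrm{SubTree}(t^\sharp)$ of the subtree automaton $A_t$, defined by $r_1\sim_\mathrm{h}r_2\iff\mathrm{h}(r_1)=\mathrm{h}(r_2)$, is down compatible with $A_t$.
   Context: A graded alphabet is a finite set $\Sigma=\bigcup_{k\in\mathbb{N}}\Sigma_k$; $T_\Sigma$ is the set of trees $f(t_1,\ldots,t_k)$ with $f\in\Sigma_k$. A RWTA is $A=(\Sigma,Q,\nu,\delta)$ with $Q$ finite, $\nu:Q\to\mathbb{N}$, $\delta\subseteq\bigcup_k Q\times\Sigma_k\times Q^k$; $\delta(f,q_1,\ldots,q_k)=\{q\mid(q,f,q_1,\ldots,q_k)\in\delta\}$, extended to subsets by union over tuples; $\Delta(f(t_1,\ldots,t_k))=\delta(f,\Delta(t_1),\ldots,\Delta(t_k))$. The down language of a state $q$ is $L_q(A)=\{s\in T_\Sigma\mid q\in\Delta(s)\}$; an equivalence relation $\sim$ on $Q$ is down compatible with $A$ if $q_1\sim q_2$ implies $L_{q_1}(A)=L_{q_2}(A)$. For $t=f(t_1,\ldots,t_k)$, $\mathrm{SubTree}(t)=\{t\}\cup\bigcup_j\mathrm{SubTree}(t_j)$. The tree $t^\sharp$ is obtained from $t$ by indexing each symbol occurrence with its position in a preorder traversal (indexed symbols are distinct and keep their arity); $\Sigma_{t^\sharp}$ is the set of indexed symbols of $t^\sharp$; $\mathrm{h}$ erases indices. The subtree automaton of $t$ is $A_t=(\Sigma,Q,\nu,\delta)$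 with $Q=\mathrm{SubTree}(t^\sharp)$, $\nu\equiv1$, and for $f\in\Sigma_{t^\sharp}$ of arity $k$ and $t_1,\ldots,t_{k+1}\in Q$: $t_{k+1}\in\delta(\mathrm{h}(f),t_1,\ldots,t_k)$ iff $t_{k+1}=f(t_1,\ldots,t_k)$. *)

theory Defs
  imports Main
begin

datatype 'f tree = Node 'f "'f tree list"

fun wf_tree :: "('f \<times> nat) set \<Rightarrow> 'f tree \<Rightarrow> bool" where
  "wf_tree \<Sigma> (Node f ts) = ((f, length ts) \<in> \<Sigma> \<and> (\<forall>s\<in>set ts. wf_tree \<Sigma> s))"

definition trees :: "('f \<times> nat) set \<Rightarrow> 'f tree set" where
  "trees \<Sigma> = {t. wf_tree \<Sigma> t}"

record ('f, 'q) rwta =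
  alph :: "('f \<times> nat) set"
  states :: "'q set"
  weight :: "'q \<Rightarrow> nat"
  trans :: "('q \<times> 'f \<times> 'q list) set"

fun Delta :: "('f, 'q) rwta \<Rightarrow> 'f tree \<Rightarrow> 'q set" where
  "Delta A (Node f ts) =
     {q. \<exists>qs. (q, f, qs) \<in> trans A \<and> list_all2 (\<in>) qs (map (Delta A) ts)}"

definition down_lang :: "('f, 'q) rwta \<Rightarrow> 'q \<Rightarrow> 'f tree set" where
  "down_lang A q = {s \<in> trees (alph A). q \<in> Delta A s}"

definition down_compatible :: "('f, 'q) rwta \<Rightarrow> ('q \<times> 'q) set \<Rightarrow> bool" where
  "down_compatible A R \<longleftrightarrow> equiv (states A) R \<and>
     (\<forall>q1 q2. (q1, q2) \<in> R \<longrightarrow> down_lang A q1 = down_lang A q2)"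

fun subtrees :: "'f tree \<Rightarrow> 'f tree set" where
  "subtrees (Node f ts) = insert (Node f ts) (\<Union>s\<in>set ts. subtrees s)"

fun nodes :: "'f tree \<Rightarrow> nat" where
  "nodes (Node f ts) = Suc (sum_list (map nodes ts))"

text \<open>Preorder indexing: idx n t labels each node with its preorder position, starting at n.\<close>
fun idx :: "nat \<Rightarrow> 'f tree \<Rightarrow> ('f \<times> nat) tree"
and idxs :: "nat \<Rightarrow> 'f tree list \<Rightarrow> ('f \<times> nat) tree list" where
  "idx n (Node f ts) = Node (f, n) (idxs (Suc n) ts)"
| "idxs n [] = []"
| "idxs n (s # ss) = idx n s # idxs (n + nodes s) ss"

definition sharp :: "'f tree \<Rightarrow> ('f \<times> nat) tree" where
  "sharp t = idx 0 t"

definition erase :: "('f \<times> nat) tree \<Rightarrow> 'f tree" where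
  "erase r = map_tree fst r"

definition syms :: "'g tree \<Rightarrow> ('g \<times> nat) set" where
  "syms t = {(g, length rs) | g rs. Node g rs \<in> subtrees t}"

definition subtree_aut :: "('f \<times> nat) set \<Rightarrow> 'f tree \<Rightarrow> ('f, ('f \<times> nat) tree) rwta" where
  "subtree_aut \<Sigma> t =
    \<lparr> alph = \<Sigma>,
      states = subtrees (sharp t),
      weight = (\<lambda>_. 1),
      trans = {(q, fst g, qs) | q g qs.
                 (g, length qs) \<in> syms (sharp t) \<and> q \<in> subtrees (sharp t)
                 \<and> set qs \<subseteq> subtrees (sharp t) \<and> q = Node g qs} \<rparr>"

end

theory Submission
  imports Defs
begin

text \<open>A run of the subtree automaton of t on a tree s can only reach indexed copies of s, and
  it reaches all of them: a state r of A_t lies in \<Delta>(s) iff h(r) = s. So the down language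
  of r is {h(r)} (intersected with T_\<Sigma>), and states with the same erasure have the same
  down language.\<close>

lemma subtrees_refl: "t \<in> subtrees t"
  by (cases t) auto

lemma subtrees_subset: "u \<in> subtrees v \<Longrightarrow> subtrees u \<subseteq> subtrees v"
  by (induction v) auto

lemma children_in_subtrees: "Node g qs \<in> subtrees v \<Longrightarrow> set qs \<subseteq> subtrees v"
  using subtrees_subset[of "Node g qs" v] subtrees_refl by fastforce

lemma erase_Node: "erase (Node g qs) = Node (fst g) (map erase qs)"
  by (simp add: erase_def)

lemma list_all2_mem_fibres:
  assumes "\<And>s. s \<in> set ts \<Longrightarrow> D s = {q \<in> S. e q = s}"
  shows "list_all2 (\<in>) qs (map D ts) \<longleftrightarrow> set qs \<subseteq> S \<and> map e qs = ts"
  using assms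
proof (induction ts arbitrary: qs)
  case Nil
  then show ?case by auto
next
  case (Cons s ts)
  then show ?case by (cases qs) auto
qed

lemma trans_subtree_aut:
  "(q, f, qs) \<in> trans (subtree_aut \<Sigma> t) \<longleftrightarrow>
     (\<exists>g. q = Node g qs \<and> f = fst g \<and> q \<in> subtrees (sharp t))"
proof
  assume "(q, f, qs) \<in> trans (subtree_aut \<Sigma> t)"
  then show "\<exists>g. q = Node g qs \<and> f = fst g \<and> q \<in> subtrees (sharp t)"
    unfolding subtree_aut_def by auto
next
  assume "\<exists>g. q = Node g qs \<and> f = fst g \<and> q \<in> subtrees (sharp t)"
  then obtain g where q: "q = Node g qs" "f = fst g" "q \<in> subtrees (sharp t)"
    by blast
  then have "(g, length qs) \<in> syms (sharp t)"
    unfolding syms_def by blast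
  moreover have "set qs \<subseteq> subtrees (sharp t)"
    using q children_in_subtrees[of g qs "sharp t"] by simp
  ultimately show "(q, f, qs) \<in> trans (subtree_aut \<Sigma> t)"
    using q unfolding subtree_aut_def by (cases g) simp
qed

lemma Delta_subtree_aut:
  "Delta (subtree_aut \<Sigma> t) s = {q \<in> subtrees (sharp t). erase q = s}"
proof (induction "subtree_aut \<Sigma> t" s rule: Delta.induct)
  case (1 f ts)
  let ?S = "subtrees (sharp t)"
  have children: "\<And>qs. list_all2 (\<in>) qs (map (Delta (subtree_aut \<Sigma> t)) ts)
                    \<longleftrightarrow> set qs \<subseteq> ?S \<and> map erase qs = ts"
    by (rule list_all2_mem_fibres) (rule "1")
  show ?case
  proof (intro set_eqI iffI)
    fix q assume "q \<in> Delta (subtree_aut \<Sigma> t) (Node f ts)"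
    then obtain g qs where "q = Node g qs" "f = fst g" "q \<in> ?S"
      and "list_all2 (\<in>) qs (map (Delta (subtree_aut \<Sigma> t)) ts)"
      by (auto simp: trans_subtree_aut)
    with children show "q \<in> {q \<in> ?S. erase q = Node f ts}"
      by (simp add: erase_Node)
  next
    fix q assume q: "q \<in> {q \<in> ?S. erase q = Node f ts}"
    obtain g qs where q_Node: "q = Node g qs"
      by (cases q)
    with q have "f = fst g" "map erase qs = ts" "set qs \<subseteq> ?S"
      using children_in_subtrees[of g qs] by (auto simp: erase_Node)
    with q q_Node have "(q, f, qs) \<in> trans (subtree_aut \<Sigma> t)"
      "list_all2 (\<in>) qs (map (Delta (subtree_aut \<Sigma> t)) ts)"
      using children by (auto simp: trans_subtree_aut)
    then show "q \<in> Delta (subtree_aut \<Sigma> t) (Node f ts)"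
      by auto
  qed
qed

lemma down_lang_subtree_aut:
  assumes "q \<in> subtrees (sharp t)"
  shows "down_lang (subtree_aut \<Sigma> t) q = {s \<in> trees \<Sigma>. s = erase q}"
proof -
  have "alph (subtree_aut \<Sigma> t) = \<Sigma>"
    by (simp add: subtree_aut_def)
  then show ?thesis
    using assms by (auto simp: down_lang_def Delta_subtree_aut)
qed

theorem lemma8:
  fixes \<Sigma> :: "('f \<times> nat) set" and t :: "'f tree"
  assumes "finite \<Sigma>" and "t \<in> trees \<Sigma>"
  shows "down_compatible (subtree_aut \<Sigma> t)
           {(r1, r2). r1 \<in> subtrees (sharp t) \<and> r2 \<in> subtrees (sharp t) \<and> erase r1 = erase r2}"
  unfolding down_compatible_def
proof
  show "equiv (states (subtree_aut \<Sigma> t))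
     {(r1, r2). r1 \<in> subtrees (sharp t) \<and> r2 \<in> subtrees (sharp t) \<and> erase r1 = erase r2}"
    by (auto simp: equiv_def refl_on_def sym_def Relation.trans_def subtree_aut_def)
  show "\<forall>q1 q2. (q1, q2) \<in> {(r1, r2). r1 \<in> subtrees (sharp t) \<and> r2 \<in> subtrees (sharp t)
                                    \<and> erase r1 = erase r2} \<longrightarrow>
        down_lang (subtree_aut \<Sigma> t) q1 = down_lang (subtree_aut \<Sigma> t) q2"
    by (simp add: down_lang_subtree_aut)
qed

end
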